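(* Let $X_1,X_2,\dots$ be i.i.d. Bernoulli$(1/2)$ random variables, $S_0=0$ and $S_k=\sum_{i=1}^k X_i$. Then $$a_{\mathrm{kn}}=\mathbb E\left[\sup_{k\ge0}\frac{S_k}{1+k-S_k}\right]\le 2.1.$$ *)

theory Defs
  imports "HOL-Probability.Probability"
begin

definition partial_sum :: "(nat \<Rightarrow> 'a \<Rightarrow> bool) \<Rightarrow> nat \<Rightarrow> 'a \<Rightarrow> real" where
  "partial_sum X k \<omega> = (\<Sum>i\<in>{1..k}. of_bool (X i \<omega>))"

end

theory Submission
  imports Defs
begin

(* Let Z = sup_k S_k / (1 + k - S_k). For naturals j and q > 0, Z > j/q holds iff the walk
   q S_k - j (k - S_k), which moves +q or -j with probability 1/2 each, ever exceeds j.
   If 0 < y <= 1 and 1 + y^(q+j) <= 2 y^q, then y^(c+1), as a function of the remaining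
   distance c to the level, is superharmonic for this walk; counting the n-step paths that
   cross shows that the level is reached with probability at most y^(j+1).
   Summing these tail bounds over the thresholds 1, 6/5, 7/5, 3/2, 2, 5/2, 3, 4, 5, 6, 7, ...
   (a discrete layer-cake formula) gives E Z <= 1 + 1.1. *)

definition walk_sum :: "nat \<Rightarrow> nat \<Rightarrow> bool list \<Rightarrow> int" where
  "walk_sum q j bs = (\<Sum>b\<leftarrow>bs. if b then int q else - int j)"

definition crosses :: "nat \<Rightarrow> nat \<Rightarrow> int \<Rightarrow> bool list \<Rightarrow> bool" where
  "crosses q j c bs \<longleftrightarrow> (\<exists>k\<le>length bs. walk_sum q j (take k bs) > c)"

lemma crosses_Nil [simp]: "crosses q j c [] \<longleftrightarrow> c < 0"
  by (simp add: crosses_def walk_sum_def)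

lemma crosses_Cons:
  "crosses q j c (b # bs) \<longleftrightarrow> c < 0 \<or> crosses q j (c - (if b then int q else - int j)) bs"
proof -
  have "(\<exists>k\<le>Suc n. P k) \<longleftrightarrow> P 0 \<or> (\<exists>k\<le>n. P (Suc k))" for n and P :: "nat \<Rightarrow> bool"
    using Ex_less_Suc2[of "Suc n" P] by (simp add: less_Suc_eq_le)
  then show ?thesis
    unfolding crosses_def walk_sum_def by (auto simp: algebra_simps)
qed

definition crossing_potential :: "real \<Rightarrow> int \<Rightarrow> real" where
  "crossing_potential y c = (if c < 0 then 1 else y ^ nat (c + 1))"

lemma crossing_potential_superharmonic:
  assumes y: "0 < y" "y \<le> 1" and feasible: "1 + y ^ (q + j) \<le> 2 * y ^ q" and c: "0 \<le> c"
  shows "crossing_potential y (c - int q) + crossing_potential y (c + int j) \<le> 2 * crossing_potential y c"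
proof -
  have up: "crossing_potential y (c - int q) * y ^ q \<le> y ^ nat (c + 1)"
  proof (cases "c < int q")
    case True
    then have "y ^ q \<le> y ^ nat (c + 1)" using y by (intro power_decreasing) auto
    then show ?thesis using True by (simp add: crossing_potential_def)
  next
    case False
    then have "nat (c + 1) = nat (c - int q + 1) + q" by linarith
    then show ?thesis using False by (simp add: crossing_potential_def power_add)
  qed
  have down: "crossing_potential y (c + int j) = y ^ nat (c + 1) * y ^ j"
    using c by (simp add: crossing_potential_def nat_add_distrib power_add)
  have "(crossing_potential y (c - int q) + crossing_potential y (c + int j)) * y ^ q
      \<le> y ^ nat (c + 1) * (1 + y ^ (q + j))"
    using up down by (simp add: algebra_simps power_add)
  also have "\<dots> \<le> (2 * crossing_potential y c) * y ^ q"
    using feasible y c by (simp add: crossing_potential_def mult_left_mono mult.left_commute)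
  finally show ?thesis using y by simp
qed

lemma card_lists_Suc_filter:
  "card {bs. length bs = Suc n \<and> P bs} =
     card {bs. length bs = n \<and> P (True # bs)} + card {bs. length bs = n \<and> P (False # bs)}"
proof -
  let ?A = "\<lambda>b. {bs. length bs = n \<and> P (b # bs)}"
  have fin: "finite (?A b)" for b
    using finite_lists_length_eq[of "UNIV :: bool set" n] by (rule rev_finite_subset) auto
  have "{bs. length bs = Suc n \<and> P bs} = Cons True ` ?A True \<union> Cons False ` ?A False"
    by (auto simp: length_Suc_conv image_iff) (metis (full_types))+
  also have "card \<dots> = card (?A True) + card (?A False)"
    using fin by (subst card_Un_disjoint) (auto simp: card_image)
  finally show ?thesis .
qed

lemma card_crossing_walks_le:
  assumes y: "0 < y" "y \<le> 1" and feasible: "1 + y ^ (q + j) \<le> 2 * y ^ q"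
  shows "real (card {bs. length bs = n \<and> crosses q j c bs}) \<le> 2 ^ n * crossing_potential y c"
proof (induction n arbitrary: c)
  case 0
  have "{bs. length bs = 0 \<and> crosses q j c bs} = (if c < 0 then {[]} else {})" by auto
  then show ?case using y by (simp add: crossing_potential_def)
next
  case (Suc n)
  show ?case
  proof (cases "c < 0")
    case True
    then have "{bs. length bs = Suc n \<and> crosses q j c bs} = {bs. length bs = Suc n}"
      by (auto simp: crosses_def walk_sum_def intro!: exI[of _ 0])
    then show ?thesis
      using True card_lists_length_eq[of "UNIV :: bool set" "Suc n"]
      by (simp add: crossing_potential_def)
  next
    case False
    have "real (card {bs. length bs = Suc n \<and> crosses q j c bs})
        = real (card {bs. length bs = n \<and> crosses q j (c - int q) bs})
          + real (card {bs. length bs = n \<and> crosses q j (c + int j) bs})"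
      using False by (simp add: card_lists_Suc_filter crosses_Cons)
    also have "\<dots> \<le> 2 ^ n * (crossing_potential y (c - int q) + crossing_potential y (c + int j))"
      using Suc.IH[of "c - int q"] Suc.IH[of "c + int j"] by (simp add: algebra_simps)
    also have "\<dots> \<le> 2 ^ Suc n * crossing_potential y c"
      using crossing_potential_superharmonic[OF y feasible, of c] False by simp
    finally show ?thesis .
  qed
qed

definition flips :: "(nat \<Rightarrow> 'a \<Rightarrow> bool) \<Rightarrow> nat \<Rightarrow> 'a \<Rightarrow> bool list" where
  "flips X n \<omega> = map (\<lambda>i. X (Suc i) \<omega>) [0..<n]"

lemma length_flips [simp]: "length (flips X n \<omega>) = n"
  by (simp add: flips_def)

lemma take_flips: "k \<le> n \<Longrightarrow> take k (flips X n \<omega>) = flips X k \<omega>"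
  by (simp add: flips_def take_map)

lemma walk_sum_flips:
  "real_of_int (walk_sum q j (flips X k \<omega>)) =
     real q * partial_sum X k \<omega> - real j * (real k - partial_sum X k \<omega>)"
  by (induction k) (auto simp: flips_def walk_sum_def partial_sum_def algebra_simps)

locale fair_coin_flips = prob_space M for M :: "'a measure" +
  fixes X :: "nat \<Rightarrow> 'a \<Rightarrow> bool"
  assumes indep_flips: "indep_vars (\<lambda>_. count_space UNIV) X {1..}"
    and fair_flips: "\<And>i. 1 \<le> i \<Longrightarrow> distr M (count_space UNIV) (X i) = measure_pmf (bernoulli_pmf (1/2))"
begin

lemma measurable_flip: "1 \<le> i \<Longrightarrow> X i \<in> measurable M (count_space UNIV)"
  using indep_flips by (auto simp: indep_vars_def)

lemma prob_flip: "1 \<le> i \<Longrightarrow> prob (X i -` {b} \<inter> space M) = 1/2"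
  using measure_distr[OF measurable_flip, of i "{b}"] fair_flips[of i]
  by (cases b) (simp_all add: measure_pmf_single)

lemma flips_event_eq:
  assumes "length bs = n" and "0 < n"
  shows "{\<omega>\<in>space M. flips X n \<omega> = bs} = (\<Inter>i\<in>{1..n}. X i -` {bs ! (i - 1)} \<inter> space M)"
proof -
  have "flips X n \<omega> = bs \<longleftrightarrow> (\<forall>i\<in>{1..n}. X i \<omega> = bs ! (i - 1))" for \<omega>
  proof -
    have "flips X n \<omega> = bs \<longleftrightarrow> (\<forall>i<n. X (Suc i) \<omega> = bs ! i)"
      using assms(1) by (auto simp: flips_def list_eq_iff_nth_eq)
    also have "\<dots> \<longleftrightarrow> (\<forall>i\<in>{1..n}. X i \<omega> = bs ! (i - 1))"
      unfolding image_Suc_lessThan[symmetric] by auto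
    finally show ?thesis .
  qed
  then show ?thesis
    using assms(2) by auto
qed

lemma flips_event_sets:
  assumes "length bs = n"
  shows "{\<omega>\<in>space M. flips X n \<omega> = bs} \<in> events"
proof (cases "n = 0")
  case False
  then have "0 < n" by simp
  then show ?thesis
    unfolding flips_event_eq[OF assms \<open>0 < n\<close>] using measurable_sets[OF measurable_flip]
    by (intro sets.finite_INT) auto
qed (simp add: flips_def)

lemma prob_flips_event:
  assumes "length bs = n"
  shows "prob {\<omega>\<in>space M. flips X n \<omega> = bs} = (1/2) ^ n"
proof (cases "n = 0")
  case False
  then have "0 < n" by simp
  then have "prob {\<omega>\<in>space M. flips X n \<omega> = bs} =
      (\<Prod>i\<in>{1..n}. prob (X i -` {bs ! (i - 1)} \<inter> space M))"
    unfolding flips_event_eq[OF assms \<open>0 < n\<close>] by (intro indep_varsD[OF indep_flips]) auto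
  then show ?thesis
    by (simp add: prob_flip)
qed (use assms in \<open>simp add: flips_def prob_space\<close>)

lemma flips_in_sets:
  assumes "G \<subseteq> {bs. length bs = n}"
  shows "{\<omega>\<in>space M. flips X n \<omega> \<in> G} \<in> events"
proof -
  have "{\<omega>\<in>space M. flips X n \<omega> \<in> G} = (\<Union>bs\<in>G. {\<omega>\<in>space M. flips X n \<omega> = bs})"
    by auto
  also have "\<dots> \<in> events"
    using assms finite_lists_length_eq[of "UNIV :: bool set" n]
    by (intro sets.finite_UN) (auto intro: finite_subset flips_event_sets)
  finally show ?thesis .
qed

lemma prob_flips_in:
  assumes "G \<subseteq> {bs. length bs = n}"
  shows "prob {\<omega>\<in>space M. flips X n \<omega> \<in> G} = card G / 2 ^ n"
proof -
  have fin: "finite G"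
    using assms finite_lists_length_eq[of "UNIV :: bool set" n] by (auto intro: finite_subset)
  have "{\<omega>\<in>space M. flips X n \<omega> \<in> G} = (\<Union>bs\<in>G. {\<omega>\<in>space M. flips X n \<omega> = bs})"
    by auto
  also have "prob \<dots> = (\<Sum>bs\<in>G. prob {\<omega>\<in>space M. flips X n \<omega> = bs})"
    using assms fin by (intro measure_finite_Union) (auto simp: disjoint_family_on_def flips_event_sets)
  also have "\<dots> = card G / 2 ^ n"
    using assms by (simp add: prob_flips_event subset_iff power_one_over)
  finally show ?thesis .
qed

lemma emeasure_walk_exceeds_le:
  assumes y: "0 < y" "y \<le> 1" and feasible: "1 + y ^ (q + j) \<le> 2 * y ^ q"
  shows "emeasure M {\<omega>\<in>space M. \<exists>k. real q * partial_sum X k \<omega> - real j * (real k - partial_sum X k \<omega>) > real j}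
    \<le> ennreal (y ^ (j + 1))"
proof -
  define E where "E n = {\<omega>\<in>space M. flips X n \<omega> \<in> {bs. length bs = n \<and> crosses q j (int j) bs}}" for n
  have E_eq: "E n = {\<omega>\<in>space M. \<exists>k\<le>n. walk_sum q j (flips X k \<omega>) > int j}" for n
    by (auto simp: E_def crosses_def take_flips)
  have E_sets: "E n \<in> events" for n
    unfolding E_def by (rule flips_in_sets) auto
  have "incseq E"
    by (auto simp: incseq_def E_eq intro: order_trans)
  have walk_gt_iff: "real q * partial_sum X k \<omega> - real j * (real k - partial_sum X k \<omega>) > real j
      \<longleftrightarrow> walk_sum q j (flips X k \<omega>) > int j" for k \<omega>
    by (metis walk_sum_flips of_int_less_iff of_int_of_nat_eq)
  have "{\<omega>\<in>space M. \<exists>k. real q * partial_sum X k \<omega> - real j * (real k - partial_sum X k \<omega>) > real j}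
      = (\<Union>n. E n)"
    by (auto simp: E_eq walk_gt_iff)
  also have "emeasure M (\<Union>n. E n) = (SUP n. emeasure M (E n))"
    using E_sets \<open>incseq E\<close> by (intro SUP_emeasure_incseq[symmetric]) auto
  also have "\<dots> \<le> ennreal (y ^ (j + 1))"
  proof (rule SUP_least)
    fix n
    have "prob (E n) = card {bs. length bs = n \<and> crosses q j (int j) bs} / 2 ^ n"
      unfolding E_def by (rule prob_flips_in) auto
    also have "\<dots> \<le> crossing_potential y (int j)"
      using card_crossing_walks_le[OF y feasible, of n "int j"] by (simp add: field_simps)
    finally show "emeasure M (E n) \<le> ennreal (y ^ (j + 1))"
      by (simp add: emeasure_eq_measure crossing_potential_def ennreal_leI nat_add_distrib)
  qed
  finally show ?thesis .
qed

lemma borel_measurable_partial_sum: "partial_sum X k \<in> borel_measurable M"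
  unfolding partial_sum_def
  by (intro borel_measurable_sum) (auto intro: measurable_compose[OF measurable_flip])

end

lemma partial_sum_le: "partial_sum X k \<omega> \<le> real k"
  using sum_mono[of "{1..k}" "\<lambda>i. of_bool (X i \<omega>) :: real" "\<lambda>_. 1"]
  by (simp add: partial_sum_def)

lemma walk_gt_of_ratio_gt:
  fixes q j s k :: real
  assumes "0 < q" "s \<le> k" "j / q < s / (1 + k - s)"
  shows "j < q * s - j * (k - s)"
proof -
  have "j * (1 + k - s) < s * q"
    using assms by (simp add: divide_less_eq less_divide_eq field_simps)
  then show ?thesis
    by (simp add: algebra_simps)
qed

lemma min_le_threshold_sum:
  fixes t :: "nat \<Rightarrow> real" and z :: ennreal
  assumes "incseq t" "0 \<le> t 0"
  shows "min z (ennreal (t n)) \<le> ennreal (t 0) + (\<Sum>l<n. ennreal (t (Suc l) - t l) * of_bool (ennreal (t l) < z))"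
proof (induction n)
  case (Suc n)
  show ?case
  proof (cases "ennreal (t n) < z")
    case True
    have "ennreal (t l) < z" if "l < Suc n" for l
      using that True incseqD[OF assms(1), of l n] by (meson ennreal_leI le_less_trans less_Suc_eq_le)
    then have "(\<Sum>l<Suc n. ennreal (t (Suc l) - t l) * of_bool (ennreal (t l) < z))
        = (\<Sum>l<Suc n. ennreal (t (Suc l) - t l))"
      by simp
    also have "\<dots> = ennreal (\<Sum>l<Suc n. t (Suc l) - t l)"
      using incseq_SucD[OF assms(1)] by (intro sum_ennreal) auto
    also have "(\<Sum>l<Suc n. t (Suc l) - t l) = t (Suc n) - t 0"
      by (rule sum_lessThan_telescope)
    finally show ?thesis
      using assms incseqD[OF assms(1), of 0 "Suc n"] by (simp flip: ennreal_plus)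
  next
    case False
    then have "min z (ennreal (t (Suc n))) \<le> min z (ennreal (t n))"
      by (simp add: not_less)
    also have "\<dots> \<le> ennreal (t 0) + (\<Sum>l<n. ennreal (t (Suc l) - t l) * of_bool (ennreal (t l) < z))"
      by (rule Suc.IH)
    also have "\<dots> \<le> ennreal (t 0) + (\<Sum>l<Suc n. ennreal (t (Suc l) - t l) * of_bool (ennreal (t l) < z))"
      by (intro add_left_mono) simp
    finally show ?thesis .
  qed
qed simp

lemma le_threshold_series:
  fixes t :: "nat \<Rightarrow> real" and z :: ennreal
  assumes "incseq t" "\<And>x. \<exists>l. x \<le> t l" "0 \<le> t 0"
  shows "z \<le> ennreal (t 0) + (\<Sum>l. ennreal (t (Suc l) - t l) * of_bool (ennreal (t l) < z))"
proof (rule dense_le)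
  fix x assume "x < z"
  then obtain r where r: "x = ennreal r" "0 \<le> r"
    by (cases x) (auto simp: top_unique)
  obtain n where "r \<le> t n"
    using assms(2) by blast
  then have "x \<le> min z (ennreal (t n))"
    using \<open>x < z\<close> r by (auto intro: ennreal_leI)
  also have "\<dots> \<le> ennreal (t 0) + (\<Sum>l<n. ennreal (t (Suc l) - t l) * of_bool (ennreal (t l) < z))"
    using assms(1,3) by (rule min_le_threshold_sum)
  also have "\<dots> \<le> ennreal (t 0) + (\<Sum>l. ennreal (t (Suc l) - t l) * of_bool (ennreal (t l) < z))"
    by (intro add_left_mono sum_le_suminf) auto
  finally show "x \<le> ennreal (t 0) + (\<Sum>l. ennreal (t (Suc l) - t l) * of_bool (ennreal (t l) < z))" .
qed

lemma nn_integral_le_threshold_series: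
  fixes t :: "nat \<Rightarrow> real"
  assumes "incseq t" "\<And>x. \<exists>l. x \<le> t l" "0 \<le> t 0" and f: "f \<in> borel_measurable M"
  shows "(\<integral>\<^sup>+x. f x \<partial>M) \<le> ennreal (t 0) * emeasure M (space M) +
    (\<Sum>l. ennreal (t (Suc l) - t l) * emeasure M {x\<in>space M. ennreal (t l) < f x})"
proof -
  define A where "A l = {x\<in>space M. ennreal (t l) < f x}" for l
  have A: "A l \<in> sets M" for l
    unfolding A_def using f by measurable
  have "(\<integral>\<^sup>+x. f x \<partial>M) \<le>
      (\<integral>\<^sup>+x. ennreal (t 0) + (\<Sum>l. ennreal (t (Suc l) - t l) * indicator (A l) x) \<partial>M)"
    using le_threshold_series[OF assms(1-3)]
    by (intro nn_integral_mono) (simp add: A_def indicator_def)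
  also have "\<dots> = ennreal (t 0) * emeasure M (space M) +
      (\<Sum>l. ennreal (t (Suc l) - t l) * emeasure M (A l))"
    using A by (simp add: nn_integral_add nn_integral_suminf nn_integral_cmult_indicator)
  finally show ?thesis
    by (simp add: A_def)
qed

definition threshold_num :: "nat \<Rightarrow> nat" where
  "threshold_num l = (if l < 9 then [1, 6, 7, 3, 2, 5, 3, 4, 5] ! l else l - 3)"

definition threshold_den :: "nat \<Rightarrow> nat" where
  "threshold_den l = (if l < 9 then [1, 5, 5, 2, 1, 2, 1, 1, 1] ! l else 1)"

definition threshold :: "nat \<Rightarrow> real" where
  "threshold l = real (threshold_num l) / real (threshold_den l)"

definition crossing_rate :: "nat \<Rightarrow> real" where
  "crossing_rate l =
    (if l < 9 then [1, 30/31, 18/19, 17/20, 13/21, 28/37, 31/57, 13/25, 26/51] ! l else 26/51)"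

definition threshold_weight :: "nat \<Rightarrow> real" where
  "threshold_weight l = (threshold (Suc l) - threshold l) * crossing_rate l ^ (threshold_num l + 1)"

lemma less_9_cases:
  "l < (9::nat) \<Longrightarrow> l = 0 \<or> l = 1 \<or> l = 2 \<or> l = 3 \<or> l = 4 \<or> l = 5 \<or> l = 6 \<or> l = 7 \<or> l = 8"
  by auto

lemma threshold_den_pos: "0 < threshold_den l"
  by (cases "l < 9") (auto dest!: less_9_cases simp: threshold_den_def)

lemma crossing_rate_pos: "0 < crossing_rate l"
  and crossing_rate_le_1: "crossing_rate l \<le> 1"
  by (cases "l < 9"; auto dest!: less_9_cases simp: crossing_rate_def)+

lemma crossing_rate_feasible:
  "1 + crossing_rate l ^ (threshold_den l + threshold_num l) \<le> 2 * crossing_rate l ^ threshold_den l"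
proof (cases "l < 9")
  case True
  then show ?thesis
    by (auto dest!: less_9_cases simp: crossing_rate_def threshold_den_def threshold_num_def power_divide)
next
  case False
  have "(26/51 :: real) ^ (l - 2) \<le> (26/51) ^ 7"
    using False by (intro power_decreasing) auto
  also have "\<dots> \<le> 2 * (26/51) - 1"
    by (simp add: power_divide)
  finally show ?thesis
    using False by (simp add: crossing_rate_def threshold_den_def threshold_num_def Suc_diff_Suc numeral_eq_Suc)
qed

lemma threshold_0: "threshold 0 = 1"
  by (simp add: threshold_def threshold_num_def threshold_den_def)

lemma incseq_threshold: "incseq threshold"
proof (rule incseq_SucI)
  fix l
  show "threshold l \<le> threshold (Suc l)"
    by (cases "l < 9") (auto dest!: less_9_cases simp: threshold_def threshold_num_def threshold_den_def)
qed

lemma threshold_unbounded: "\<exists>l. x \<le> threshold l"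
proof -
  obtain n :: nat where "x \<le> real n"
    using real_arch_simple by blast
  then show ?thesis
    by (intro exI[of _ "n + 9"]) (simp add: threshold_def threshold_num_def threshold_den_def)
qed

lemma threshold_weight_tail: "threshold_weight (i + 9) = (26/51) ^ 7 * (26/51) ^ i"
  by (simp add: threshold_weight_def threshold_def threshold_num_def threshold_den_def crossing_rate_def
      flip: power_add)

lemma threshold_weight_nonneg: "0 \<le> threshold_weight l"
  using incseqD[OF incseq_threshold, of l "Suc l"] crossing_rate_pos[of l]
  by (simp add: threshold_weight_def)

lemma summable_threshold_weight: "summable threshold_weight"
proof -
  have "summable (\<lambda>i. threshold_weight (i + 9))"
    unfolding threshold_weight_tail by (intro summable_mult summable_geometric) simp
  then show ?thesis
    using summable_iff_shift by blast
qed

lemma suminf_threshold_weight_le: "(\<Sum>l. threshold_weight l) \<le> 11/10"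
proof -
  have "(\<Sum>l. threshold_weight l) = (\<Sum>i. threshold_weight (i + 9)) + (\<Sum>l<9. threshold_weight l)"
    by (rule suminf_split_initial_segment[OF summable_threshold_weight])
  also have "(\<Sum>i. threshold_weight (i + 9)) = (26/51) ^ 7 * (1 / (1 - 26/51))"
    unfolding threshold_weight_tail by (subst suminf_mult) (auto simp: suminf_geometric)
  also have "(26/51) ^ 7 * (1 / (1 - 26/51)) + (\<Sum>l<9. threshold_weight l) \<le> (11/10 :: real)"
    by (simp add: numeral_eq_Suc threshold_weight_def threshold_def threshold_num_def
        threshold_den_def crossing_rate_def power_divide)
  finally show ?thesis .
qed

theorem lemmaB1:
  fixes M :: "'a measure" and X :: "nat \<Rightarrow> 'a \<Rightarrow> bool"
  assumes "prob_space M"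
    and "prob_space.indep_vars M (\<lambda>_. count_space UNIV) X {1..}"
    and "\<And>i. i \<ge> 1 \<Longrightarrow> distr M (count_space UNIV) (X i) = measure_pmf (bernoulli_pmf (1/2))"
  shows "(\<integral>\<^sup>+ \<omega>. (SUP k. ennreal (partial_sum X k \<omega> / (1 + real k - partial_sum X k \<omega>))) \<partial>M)
           \<le> ennreal 2.1"
proof -
  interpret fair_coin_flips M X
    using assms by (simp add: fair_coin_flips_def fair_coin_flips_axioms_def)
  define Z where "Z \<omega> = (SUP k. ennreal (partial_sum X k \<omega> / (1 + real k - partial_sum X k \<omega>)))" for \<omega>
  have "Z \<in> borel_measurable M"
    unfolding Z_def using borel_measurable_partial_sum by measurable
  have tail: "emeasure M {\<omega>\<in>space M. ennreal (threshold l) < Z \<omega>}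
      \<le> ennreal (crossing_rate l ^ (threshold_num l + 1))" for l
  proof -
    let ?j = "threshold_num l" and ?q = "threshold_den l"
    let ?E = "{\<omega>\<in>space M. \<exists>k. real ?q * partial_sum X k \<omega> - real ?j * (real k - partial_sum X k \<omega>) > real ?j}"
    have "{\<omega>\<in>space M. ennreal (threshold l) < Z \<omega>} \<subseteq> ?E"
      using threshold_den_pos[of l]
      by (auto simp: Z_def less_SUP_iff threshold_def ennreal_less_iff intro!: walk_gt_of_ratio_gt partial_sum_le)
    then have "emeasure M {\<omega>\<in>space M. ennreal (threshold l) < Z \<omega>} \<le> emeasure M ?E"
      by (rule emeasure_mono) (use borel_measurable_partial_sum in measurable)
    also have "\<dots> \<le> ennreal (crossing_rate l ^ (threshold_num l + 1))"
      by (rule emeasure_walk_exceeds_le[OF crossing_rate_pos crossing_rate_le_1 crossing_rate_feasible])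
    finally show ?thesis .
  qed
  have "(\<integral>\<^sup>+ \<omega>. Z \<omega> \<partial>M) \<le> ennreal (threshold 0) * emeasure M (space M) +
      (\<Sum>l. ennreal (threshold (Suc l) - threshold l) * emeasure M {\<omega>\<in>space M. ennreal (threshold l) < Z \<omega>})"
    by (rule nn_integral_le_threshold_series[OF incseq_threshold threshold_unbounded _ \<open>Z \<in> borel_measurable M\<close>])
      (simp add: threshold_0)
  also have "\<dots> \<le> 1 + (\<Sum>l. ennreal (threshold_weight l))"
  proof -
    have "ennreal (threshold (Suc l) - threshold l) * emeasure M {\<omega>\<in>space M. ennreal (threshold l) < Z \<omega>}
        \<le> ennreal (threshold_weight l)" for l
    proof -
      have "0 \<le> threshold (Suc l) - threshold l" "0 \<le> crossing_rate l ^ (threshold_num l + 1)"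
        using incseq_SucD[OF incseq_threshold, of l] crossing_rate_pos[of l] by auto
      then show ?thesis
        using mult_left_mono[OF tail[of l], of "ennreal (threshold (Suc l) - threshold l)"]
        by (simp add: threshold_weight_def ennreal_mult)
    qed
    then show ?thesis
      by (simp add: threshold_0 emeasure_space_1 add_left_mono suminf_le)
  qed
  also have "\<dots> = ennreal (1 + (\<Sum>l. threshold_weight l))"
    using summable_threshold_weight threshold_weight_nonneg
    by (simp add: suminf_ennreal2 suminf_nonneg)
  also have "\<dots> \<le> ennreal 2.1"
    using suminf_threshold_weight_le by (intro ennreal_leI) simp
  finally show ?thesis
    by (simp add: Z_def)
qed

end
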